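(* Let $X\ni x$ be a smooth surface germ and let $g:X_n\to X_{n-1}\to\cdots\to X_1\to X_0:=X$ be a sequence of blow-ups with the data $(f_i,F_i,x_i\in X_i)$ whose dual graph $\mathcal{DG}$ (the dual graph of the composite morphism $X_n\to X$) is a chain. Let $n_3$ be the largest integer with $n_3\le n$ such that $x_i\in F_i\setminus F_{i-1}$ for all $1\le i\le n_3-1$, where $F_0:=\emptyset$. Index the vertices of $\mathcal{DG}$ as $\{E_j\}_{-n_1\le j\le n_2}$ so that $E_0:=F_n$ (the only $g$-exceptional $(-1)$-curve on $X_n$), $E_{n_2}:=F_1$, and $E_j$ is adjacent to $E_{j+1}$ for $-n_1\le j\le n_2-1$. Let $w_j:=-E_j\cdot E_j$, $W_1:=\sum_{j<0}w_j$ and $W_2:=\sum_{j>0}w_j$. Then $$(W_1-n_1)+n_3-1=W_2-n_2.$$ In particular, $n=n_1+n_2+1\le n_3+\min\{W_1,W_2\}$.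
   Context: Work over an algebraically closed field. A sequence of blow-ups $X_n\to\cdots\to X_0:=X$ with the data $(f_i,F_i,x_i\in X_i)$ means: for $1\le i\le n$, $f_i:X_i\to X_{i-1}$ is the blow-up at a closed point $x_{i-1}\in X_{i-1}$ with exceptional curve $F_i$, where $x_0:=x$, and $x_i\in F_i$ for $1\le i\le n-1$; strict transforms of $F_i$ on later $X_j$ are again denoted $F_i$. The dual graph has the $n$ exceptional curves $F_1,\dots,F_n$ on $X_n$ as vertices, weights $-F_i\cdot F_i$, and edges given by intersection numbers; a chain is a path (tree without vertices of degree $\ge3$). In this situation $F_1$ is an end vertex of the chain. *)

theory Defs
  imports Main
begin

text \<open>Combinatorial model of a sequence of point blow-ups X_n -> ... -> X_0 = X of a
smooth surface germ.  Exceptional curves F_1..F_n are numbered 1..n.  The blown-up point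
x_k (k >= 1) lies on F_k; since the exceptional locus is a simple normal crossing tree,
x_k lies on at most one further exceptional curve.  The function s records this:
s k = 0 means x_k lies on no F_j with j ~= k (a free point), s k = j >= 1 means x_k is the
point F_k meet F_j.  The point x_0 = x lies on no exceptional curve.\<close>

definition on_pt :: "(nat \<Rightarrow> nat) \<Rightarrow> nat \<Rightarrow> nat \<Rightarrow> bool" where
  "on_pt s k a \<longleftrightarrow> 1 \<le> k \<and> 1 \<le> a \<and> a \<le> k \<and> (a = k \<or> a = s k)"

text \<open>intm s k a b = intersection number F_a . F_b on X_k (curves a,b in 1..k; 0 otherwise).\<close>
fun intm :: "(nat \<Rightarrow> nat) \<Rightarrow> nat \<Rightarrow> nat \<Rightarrow> nat \<Rightarrow> int" where
  "intm s 0 a b = 0"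
| "intm s (Suc k) a b =
     (if a \<le> k \<and> b \<le> k then
        intm s k a b - (if on_pt s k a \<and> on_pt s k b then 1 else 0)
      else if a = Suc k \<and> b = Suc k then -1
      else if a = Suc k \<and> 1 \<le> b \<and> b \<le> k then (if on_pt s k b then 1 else 0)
      else if b = Suc k \<and> 1 \<le> a \<and> a \<le> k then (if on_pt s k a then 1 else 0)
      else 0)"

definition valid_blowups :: "(nat \<Rightarrow> nat) \<Rightarrow> nat \<Rightarrow> bool" where
  "valid_blowups s n \<longleftrightarrow>
     (\<forall>k. 1 \<le> k \<and> k \<le> n - 1 \<longrightarrow>
        s k = 0 \<or> (1 \<le> s k \<and> s k < k \<and> intm s k (s k) k = 1))"

definition dg_adj :: "(nat \<Rightarrow> nat) \<Rightarrow> nat \<Rightarrow> nat \<Rightarrow> nat \<Rightarrow> bool" where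
  "dg_adj s n a b \<longleftrightarrow> a \<noteq> b \<and> intm s n a b \<noteq> 0"

definition dg_weight :: "(nat \<Rightarrow> nat) \<Rightarrow> nat \<Rightarrow> nat \<Rightarrow> int" where
  "dg_weight s n a = - intm s n a a"

definition dg_chain :: "(nat \<Rightarrow> nat) \<Rightarrow> nat \<Rightarrow> bool" where
  "dg_chain s n \<longleftrightarrow> (\<exists>vs. distinct vs \<and> set vs = {1..n} \<and>
     (\<forall>a\<in>{1..n}. \<forall>b\<in>{1..n}. dg_adj s n a b \<longleftrightarrow>
        (\<exists>i. Suc i < length vs \<and> {vs ! i, vs ! Suc i} = {a, b})))"

text \<open>x_i in F_i \ F_{i-1} (F_0 = empty): x_i is not on F_{i-1}.\<close>
definition n3 :: "(nat \<Rightarrow> nat) \<Rightarrow> nat \<Rightarrow> nat" where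
  "n3 s n = (GREATEST m. m \<le> n \<and>
     (\<forall>i. 1 \<le> i \<and> i \<le> m - 1 \<longrightarrow> \<not> (i \<ge> 2 \<and> s i = i - 1)))"

end

theory Submission
  imports Defs
begin

(* Induction on the number n of blow-ups, for chains labelled by an arbitrary integer interval
   with the (-1)-curve F_n at an arbitrary position.  Both sides of the identity are excesses,
   sums of (w_j - 1) over the vertices on either side of F_n.  Contracting F_n deletes it from
   the chain, joins its two neighbours and lowers their weights by one; the new (-1)-curve
   F_(n-1) is one of these neighbours, of weight 2 before the contraction.  Hence both excesses
   drop by one, except when F_n is the left end of the chain.  That happens exactly when x_(n-1)
   is a free point, and then n_3 drops by one instead; the induction carries along the extra
   invariant that n_3 = n whenever F_n is the left end of the chain. *)

lemma intm_sym: "intm s k a b = intm s k b a"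
  by (induction k) (auto simp: on_pt_def)

lemma dg_weight_self: "1 \<le> n \<Longrightarrow> dg_weight s n n = 1"
  by (cases n) (simp_all add: dg_weight_def)

lemma dg_weight_Suc:
  "a \<le> m \<Longrightarrow> dg_weight s (Suc m) a = dg_weight s m a + (if on_pt s m a then 1 else 0)"
  by (simp add: dg_weight_def)

lemma dg_weight_Suc_self: "1 \<le> m \<Longrightarrow> dg_weight s (Suc m) m = 2"
  using dg_weight_self[of m s] by (simp add: dg_weight_Suc on_pt_def)

lemma dg_weight_ge_2: "1 \<le> a \<Longrightarrow> a < n \<Longrightarrow> 2 \<le> dg_weight s n a"
proof (induction n)
  case 0
  then show ?case by simp
next
  case (Suc n)
  then show ?case
    by (cases "a = n") (simp_all add: dg_weight_Suc_self dg_weight_Suc)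
qed

lemma dg_adj_newest:
  "1 \<le> b \<Longrightarrow> b \<le> m \<Longrightarrow> dg_adj s (Suc m) (Suc m) b \<longleftrightarrow> on_pt s m b"
  by (simp add: dg_adj_def)

lemma valid_blowups_SucD: "valid_blowups s (Suc m) \<Longrightarrow> valid_blowups s m"
  unfolding valid_blowups_def by auto

lemma satellite_on_previous:
  assumes "valid_blowups s n" "1 \<le> k" "k < n" "s k \<noteq> 0"
  shows "2 \<le> k \<and> (s k = k - 1 \<or> s k = s (k - 1))"
proof -
  obtain k' where k': "k = Suc k'"
    using assms(2) by (cases k) auto
  have sk: "1 \<le> s k" "s k < k" "intm s k (s k) k = 1"
    using assms unfolding valid_blowups_def by auto
  then have "intm s (Suc k') (Suc k') (s k) = 1"
    using intm_sym k' by metis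
  then have "on_pt s k' (s k)"
    using sk k' by (cases "on_pt s k' (s k)") auto
  then show ?thesis
    using k' unfolding on_pt_def by auto
qed

lemma dg_adj_contract:
  assumes "valid_blowups s (Suc m)" "1 \<le> m" "a \<in> {1..m}" "b \<in> {1..m}"
  shows "dg_adj s m a b \<longleftrightarrow> dg_adj s (Suc m) a b \<or> (a \<noteq> b \<and> on_pt s m a \<and> on_pt s m b)"
proof (cases "a \<noteq> b \<and> on_pt s m a \<and> on_pt s m b")
  case True
  then have "{a, b} = {m, s m}" "s m \<noteq> 0"
    unfolding on_pt_def by auto
  moreover have "s m \<noteq> 0 \<Longrightarrow> intm s m (s m) m = 1"
    using assms(1,2) unfolding valid_blowups_def by auto
  ultimately have "intm s m a b = 1"
    by (metis doubleton_eq_iff intm_sym)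
  then show ?thesis
    using True unfolding dg_adj_def by simp
next
  case False
  then have "a = b \<or> intm s (Suc m) a b = intm s m a b"
    using assms(3,4) by auto
  then show ?thesis
    using False unfolding dg_adj_def by auto
qed

definition avoids_previous :: "(nat \<Rightarrow> nat) \<Rightarrow> nat \<Rightarrow> bool" where
  "avoids_previous s m \<longleftrightarrow> (\<forall>i. 2 \<le> i \<and> i < m \<longrightarrow> s i \<noteq> i - 1)"

lemma n3_eq_Greatest: "n3 s n = (GREATEST m. m \<le> n \<and> avoids_previous s m)"
proof -
  have "\<And>m. (\<forall>i. 1 \<le> i \<and> i \<le> m - 1 \<longrightarrow> \<not> (i \<ge> 2 \<and> s i = i - 1)) \<longleftrightarrow> avoids_previous s m"
    unfolding avoids_previous_def by (auto simp: less_diff_conv le_diff_conv2)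
  then show ?thesis
    unfolding n3_def by simp
qed

lemma avoids_previous_Suc:
  "avoids_previous s (Suc m) \<longleftrightarrow> avoids_previous s m \<and> \<not> (2 \<le> m \<and> s m = m - 1)"
  unfolding avoids_previous_def by (auto simp: less_Suc_eq)

lemma avoids_previous_n3: "avoids_previous s (n3 s n)"
proof -
  have "avoids_previous s 0"
    by (simp add: avoids_previous_def)
  then show ?thesis
    unfolding n3_eq_Greatest
    using GreatestI_nat[where P = "\<lambda>m. m \<le> n \<and> avoids_previous s m" and k = 0 and b = n]
    by auto
qed

lemma n3_Suc: "n3 s (Suc m) = (if avoids_previous s (Suc m) then Suc m else n3 s m)"
proof (cases "avoids_previous s (Suc m)")
  case True
  then show ?thesis
    unfolding n3_eq_Greatest by (auto intro: Greatest_equality)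
next
  case False
  then have "\<And>k. k \<le> Suc m \<and> avoids_previous s k \<longleftrightarrow> k \<le> m \<and> avoids_previous s k"
    using le_Suc_eq by auto
  then show ?thesis
    using False unfolding n3_eq_Greatest by simp
qed

lemma n3_ge_1: "1 \<le> n \<Longrightarrow> 1 \<le> n3 s n"
proof -
  assume "1 \<le> n"
  moreover have "avoids_previous s 1"
    by (simp add: avoids_previous_def)
  ultimately show ?thesis
    unfolding n3_eq_Greatest by (auto intro: Greatest_le_nat[where b = n])
qed

lemma free_prefix:
  assumes "valid_blowups s n" "avoids_previous s k" "k \<le> n"
  shows "\<forall>i. 1 \<le> i \<and> i < k \<longrightarrow> s i = 0"
  using assms(2,3)
proof (induction k)
  case 0
  then show ?case by simp
next
  case (Suc k)
  then have free: "\<forall>i. 1 \<le> i \<and> i < k \<longrightarrow> s i = 0"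
    by (simp add: avoids_previous_Suc)
  have "s k = 0" if "1 \<le> k"
  proof (rule ccontr)
    assume "s k \<noteq> 0"
    then have "2 \<le> k" "s k = k - 1 \<or> s k = s (k - 1)"
      using satellite_on_previous[OF assms(1) that] Suc.prems(2) by auto
    then show False
      using free Suc.prems(1) \<open>s k \<noteq> 0\<close> by (auto simp: avoids_previous_Suc)
  qed
  then show ?case
    using free less_Suc_eq by auto
qed

lemma n3_Suc_satellite:
  assumes "valid_blowups s (Suc m)" "1 \<le> m" "s m \<noteq> 0"
  shows "n3 s (Suc m) = n3 s m"
proof -
  have "\<not> avoids_previous s (Suc m)"
  proof
    assume avoids: "avoids_previous s (Suc m)"
    then have "\<forall>i. 1 \<le> i \<and> i < m \<longrightarrow> s i = 0"
      using free_prefix[OF assms(1), of m] by (simp add: avoids_previous_Suc)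
    then have "s m = m - 1"
      using satellite_on_previous[OF assms(1,2) _ assms(3)] assms(3) by auto
    then show False
      using avoids satellite_on_previous[OF assms(1,2) _ assms(3)]
      by (simp add: avoids_previous_Suc)
  qed
  then show ?thesis
    by (simp add: n3_Suc)
qed

lemma n3_Suc_free: "s m = 0 \<Longrightarrow> n3 s m = m \<Longrightarrow> n3 s (Suc m) = Suc m"
  using avoids_previous_n3[of s m] by (simp add: n3_Suc avoids_previous_Suc)

definition skip :: "int \<Rightarrow> int \<Rightarrow> int" where
  "skip c i = (if i < c then i else i + 1)"

lemma bij_betw_skip: "c \<in> {a..b} \<Longrightarrow> bij_betw (skip c) {a..b - 1} ({a..b} - {c})"
  by (rule bij_betw_byWitness[where f' = "\<lambda>k. if k < c then k else k - 1"])
    (auto simp: skip_def)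

lemma skip_adjacent_iff:
  "\<bar>skip c i - skip c j\<bar> = 1 \<or>
     (skip c i \<noteq> skip c j \<and> \<bar>skip c i - c\<bar> = 1 \<and> \<bar>skip c j - c\<bar> = 1) \<longleftrightarrow> \<bar>i - j\<bar> = 1"
  by (auto simp: skip_def)

definition chain_labelling :: "(nat \<Rightarrow> nat) \<Rightarrow> nat \<Rightarrow> (int \<Rightarrow> nat) \<Rightarrow> int \<Rightarrow> int \<Rightarrow> bool" where
  "chain_labelling s n E a b \<longleftrightarrow> bij_betw E {a..b} {1..n} \<and>
     (\<forall>i\<in>{a..b}. \<forall>j\<in>{a..b}. dg_adj s n (E i) (E j) \<longleftrightarrow> \<bar>i - j\<bar> = 1)"

definition excess :: "(nat \<Rightarrow> nat) \<Rightarrow> nat \<Rightarrow> (int \<Rightarrow> nat) \<Rightarrow> int set \<Rightarrow> int" where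
  "excess s n E I = (\<Sum>j\<in>I. dg_weight s n (E j) - 1)"

lemma excess_eq: "finite I \<Longrightarrow> excess s n E I = (\<Sum>j\<in>I. dg_weight s n (E j)) - int (card I)"
  by (simp add: excess_def sum_subtractf)

lemma excess_skip_below: "d < c \<Longrightarrow> excess s n (E \<circ> skip c) {a..d} = excess s n E {a..d}"
  unfolding excess_def by (rule sum.cong) (auto simp: skip_def)

lemma excess_skip_above: "c \<le> d \<Longrightarrow> excess s n (E \<circ> skip c) {d..e} = excess s n E {d + 1..e + 1}"
  unfolding excess_def
  by (rule sum.reindex_bij_witness[where i = "\<lambda>j. j - 1" and j = "\<lambda>j. j + 1"])
    (auto simp: skip_def)

lemma excess_insert: "finite I \<Longrightarrow> k \<notin> I \<Longrightarrow>
    excess s n E (insert k I) = dg_weight s n (E k) - 1 + excess s n E I"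
  by (simp add: excess_def)

context
  fixes s :: "nat \<Rightarrow> nat" and m :: nat and E :: "int \<Rightarrow> nat" and a b c :: int
  assumes valid: "valid_blowups s (Suc m)" and m_pos: "1 \<le> m"
    and chain: "chain_labelling s (Suc m) E a b"
    and c_in: "c \<in> {a..b}" and E_c: "E c = Suc m" and E_b: "E b = 1"
begin

lemma label_old_curve: "k \<in> {a..b} \<Longrightarrow> k \<noteq> c \<Longrightarrow> E k \<in> {1..m}"
proof -
  assume k: "k \<in> {a..b}" "k \<noteq> c"
  have "E k \<in> {1..Suc m}" "E k \<noteq> E c"
    using chain k c_in unfolding chain_labelling_def bij_betw_def inj_on_def by auto
  then show "E k \<in> {1..m}"
    using E_c by auto
qed

lemma on_pt_iff_neighbour: "k \<in> {a..b} \<Longrightarrow> k \<noteq> c \<Longrightarrow> on_pt s m (E k) \<longleftrightarrow> \<bar>k - c\<bar> = 1"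
  using chain c_in label_old_curve dg_adj_newest[of "E k" m s] E_c
  unfolding chain_labelling_def by (metis abs_minus_commute atLeastAtMost_iff)

lemma anchor_less_end: "c < b"
  using c_in E_b E_c m_pos by (cases "c = b") auto

lemma contracted_chain_labelling: "chain_labelling s m (E \<circ> skip c) a (b - 1)"
  unfolding chain_labelling_def
proof (intro conjI ballI)
  have "bij_betw E ({a..b} - {c}) ({1..Suc m} - {Suc m})"
    using chain c_in E_c bij_betw_DiffI[of E "{a..b}" "{1..Suc m}" "{c}" "{Suc m}"]
    unfolding chain_labelling_def by (simp add: bij_betw_def)
  moreover have "{1..Suc m} - {Suc m} = {1..m}"
    by auto
  ultimately show "bij_betw (E \<circ> skip c) {a..b - 1} {1..m}"
    using bij_betw_trans[OF bij_betw_skip[OF c_in]] by auto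
next
  fix i j assume "i \<in> {a..b - 1}" "j \<in> {a..b - 1}"
  then have ij: "skip c i \<in> {a..b} - {c}" "skip c j \<in> {a..b} - {c}"
    using bij_betw_apply[OF bij_betw_skip[OF c_in]] by blast+
  have inj: "E (skip c i) = E (skip c j) \<longleftrightarrow> skip c i = skip c j"
    using chain ij unfolding chain_labelling_def bij_betw_def by (metis DiffD1 inj_on_eq_iff)
  have "dg_adj s m (E (skip c i)) (E (skip c j)) \<longleftrightarrow>
      \<bar>skip c i - skip c j\<bar> = 1 \<or>
      (skip c i \<noteq> skip c j \<and> \<bar>skip c i - c\<bar> = 1 \<and> \<bar>skip c j - c\<bar> = 1)"
    using dg_adj_contract[OF valid m_pos] label_old_curve on_pt_iff_neighbour ij inj chain
    unfolding chain_labelling_def by auto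
  then show "dg_adj s m ((E \<circ> skip c) i) ((E \<circ> skip c) j) \<longleftrightarrow> \<bar>i - j\<bar> = 1"
    by (simp add: skip_adjacent_iff)
qed

lemma excess_contract:
  assumes "I \<subseteq> {a..b} - {c}"
  shows "excess s m E I = excess s (Suc m) E I - int (card (I \<inter> {c - 1, c + 1}))"
proof -
  have "excess s m E I =
      (\<Sum>j\<in>I. (dg_weight s (Suc m) (E j) - 1) - (if j \<in> {c - 1, c + 1} then 1 else 0))"
    unfolding excess_def
  proof (rule sum.cong)
    fix j assume "j \<in> I"
    then have "j \<in> {a..b}" "j \<noteq> c"
      using assms by auto
    then show "dg_weight s m (E j) - 1 =
        dg_weight s (Suc m) (E j) - 1 - (if j \<in> {c - 1, c + 1} then 1 else 0)"
      using label_old_curve on_pt_iff_neighbour dg_weight_Suc[of "E j" m s] by auto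
  qed simp
  also have "\<dots> = excess s (Suc m) E I - int (card (I \<inter> {c - 1, c + 1}))"
    using finite_subset[OF assms]
    by (simp add: excess_def sum_subtractf sum.If_cases Int_def insert_iff)
  finally show ?thesis .
qed

lemma previous_curve_neighbour: "E (c + 1) = m \<or> (a < c \<and> E (c - 1) = m)"
proof -
  obtain k where k: "k \<in> {a..b}" "E k = m"
    using chain m_pos unfolding chain_labelling_def bij_betw_def
    by (metis atLeastAtMost_iff image_iff le_SucI order_refl)
  then have "k \<noteq> c" "on_pt s m (E k)"
    using E_c m_pos by (auto simp: on_pt_def)
  then have "k = c + 1 \<or> k = c - 1"
    using on_pt_iff_neighbour k by auto
  then show ?thesis
    using k by auto
qed

lemma satellite_iff_left_neighbour: "s m \<noteq> 0 \<longleftrightarrow> a < c"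
proof
  assume "s m \<noteq> 0"
  then have "1 \<le> s m" "s m < m"
    using valid m_pos unfolding valid_blowups_def by auto
  then obtain k where k: "k \<in> {a..b}" "E k = s m"
    using chain unfolding chain_labelling_def bij_betw_def
    by (metis atLeastAtMost_iff image_iff le_SucI less_imp_le_nat)
  moreover have "k \<noteq> c" "on_pt s m (E k)"
    using k E_c \<open>1 \<le> s m\<close> \<open>s m < m\<close> by (auto simp: on_pt_def)
  ultimately have "\<bar>k - c\<bar> = 1"
    using on_pt_iff_neighbour by blast
  then have "k = c + 1 \<or> k = c - 1"
    by auto
  then show "a < c"
    using k \<open>s m < m\<close> previous_curve_neighbour by auto
next
  assume "a < c"
  then have "c - 1 \<in> {a..b}" "c + 1 \<in> {a..b}"
    using c_in anchor_less_end by auto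
  then have "on_pt s m (E (c - 1))" "on_pt s m (E (c + 1))" "E (c - 1) \<noteq> E (c + 1)"
    using on_pt_iff_neighbour chain unfolding chain_labelling_def bij_betw_def
    by (auto dest: inj_onD)
  then show "s m \<noteq> 0"
    unfolding on_pt_def by auto
qed

lemma balance_contract_right:
  assumes right: "E (c + 1) = m"
    and IH: "excess s m (E \<circ> skip c) {a..c - 1} + int (n3 s m) - 1
               = excess s m (E \<circ> skip c) {c + 1..b - 1}"
      "a = c \<longrightarrow> n3 s m = m"
  shows "excess s (Suc m) E {a..c - 1} + int (n3 s (Suc m)) - 1 = excess s (Suc m) E {c + 1..b}
    \<and> (a = c \<longrightarrow> n3 s (Suc m) = Suc m)"
proof -
  have left_side: "excess s m (E \<circ> skip c) {a..c - 1}
      = excess s (Suc m) E {a..c - 1} - (if a < c then 1 else 0)"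
  proof -
    have "{a..c - 1} \<subseteq> {a..b} - {c}"
      using c_in by auto
    then show ?thesis
      using excess_skip_below[of "c - 1" c s m E a] excess_contract by (simp add: Int_insert_right)
  qed
  have "excess s m (E \<circ> skip c) {c + 1..b - 1} = excess s (Suc m) E {c + 2..b}"
  proof -
    have "{c + 2..b} \<subseteq> {a..b} - {c}"
      using c_in by auto
    then show ?thesis
      using excess_skip_above[of c "c + 1" s m E "b - 1"] excess_contract
      by (simp add: Int_insert_right add.commute)
  qed
  also have "\<dots> = excess s (Suc m) E {c + 1..b} - 1"
  proof -
    have "{c + 1..b} = insert (c + 1) {c + 2..b}"
      using anchor_less_end by auto
    then show ?thesis
      using right dg_weight_Suc_self[OF m_pos] by (simp add: excess_insert)
  qed
  finally have right_side:
    "excess s m (E \<circ> skip c) {c + 1..b - 1} = excess s (Suc m) E {c + 1..b} - 1" .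
  show ?thesis
  proof (cases "a < c")
    case True
    then show ?thesis
      using IH left_side right_side satellite_iff_left_neighbour n3_Suc_satellite[OF valid m_pos]
      by simp
  next
    case False
    then have "a = c" "s m = 0"
      using c_in satellite_iff_left_neighbour by auto
    then show ?thesis
      using IH left_side right_side n3_Suc_free by simp
  qed
qed

lemma balance_contract_left:
  assumes left: "a < c" "E (c - 1) = m"
    and IH: "excess s m (E \<circ> skip c) {a..c - 2} + int (n3 s m) - 1
               = excess s m (E \<circ> skip c) {c..b - 1}"
  shows "excess s (Suc m) E {a..c - 1} + int (n3 s (Suc m)) - 1 = excess s (Suc m) E {c + 1..b}"
proof -
  have "excess s m (E \<circ> skip c) {a..c - 2} = excess s (Suc m) E {a..c - 2}"
  proof -
    have "{a..c - 2} \<subseteq> {a..b} - {c}"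
      using c_in by auto
    then show ?thesis
      using excess_skip_below[of "c - 2" c s m E a] excess_contract by (simp add: Int_insert_right)
  qed
  also have "\<dots> = excess s (Suc m) E {a..c - 1} - 1"
  proof -
    have "{a..c - 1} = insert (c - 1) {a..c - 2}"
      using left by auto
    then show ?thesis
      using left dg_weight_Suc_self[OF m_pos] by (simp add: excess_insert)
  qed
  finally have left_side:
    "excess s m (E \<circ> skip c) {a..c - 2} = excess s (Suc m) E {a..c - 1} - 1" .
  have right_side: "excess s m (E \<circ> skip c) {c..b - 1} = excess s (Suc m) E {c + 1..b} - 1"
  proof -
    have "{c + 1..b} \<subseteq> {a..b} - {c}"
      using c_in by auto
    then show ?thesis
      using excess_skip_above[of c c s m E "b - 1"] excess_contract anchor_less_end
      by (simp add: Int_insert_right)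
  qed
  have "n3 s (Suc m) = n3 s m"
    using left satellite_iff_left_neighbour n3_Suc_satellite[OF valid m_pos] by simp
  then show ?thesis
    using IH left_side right_side by simp
qed

end

lemma chain_excess_balance:
  assumes "valid_blowups s n" "1 \<le> n" "chain_labelling s n E a b"
    and "c \<in> {a..b}" "E c = n" "E b = 1"
  shows "excess s n E {a..c - 1} + int (n3 s n) - 1 = excess s n E {c + 1..b}
    \<and> (a = c \<longrightarrow> n3 s n = n)"
  using assms(2,1,3-)
proof (induction n arbitrary: E a b c rule: nat_induct_at_least)
  case base
  then have "card {a..b} = card {1..1::nat}"
    unfolding chain_labelling_def by (metis bij_betw_same_card)
  then have "a = c" "b = c"
    using base.prems(3) by auto
  moreover have "n3 s 1 = 1"
    by (simp add: n3_Suc avoids_previous_def)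
  ultimately show ?case
    by (simp add: excess_def)
next
  case (Suc m)
  note contraction = Suc.prems(1) Suc.hyps(1) Suc.prems(2-5)
  have valid_m: "valid_blowups s m"
    using Suc.prems(1) by (rule valid_blowups_SucD)
  have chain_m: "chain_labelling s m (E \<circ> skip c) a (b - 1)"
    using contracted_chain_labelling[OF contraction] .
  have end_m: "(E \<circ> skip c) (b - 1) = 1"
    using anchor_less_end[OF contraction] Suc.prems(5) by (simp add: skip_def)
  consider (right) "E (c + 1) = m" | (left) "a < c" "E (c - 1) = m"
    using previous_curve_neighbour[OF contraction] by blast
  then show ?case
  proof cases
    case right
    have "c \<in> {a..b - 1}" "(E \<circ> skip c) c = m"
      using right Suc.prems(3) anchor_less_end[OF contraction] by (auto simp: skip_def)
    from Suc.IH[OF valid_m chain_m this end_m] show ?thesis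
      using balance_contract_right[OF contraction right] by blast
  next
    case left
    have "c - 1 \<in> {a..b - 1}" "(E \<circ> skip c) (c - 1) = m"
      using left Suc.prems(3) by (auto simp: skip_def)
    from Suc.IH[OF valid_m chain_m this end_m]
    have "excess s m (E \<circ> skip c) {a..c - 2} + int (n3 s m) - 1
        = excess s m (E \<circ> skip c) {c..b - 1}"
      by (simp add: algebra_simps comp_def)
    then show ?thesis
      using balance_contract_left[OF contraction left] left(1) by simp
  qed
qed

lemma card_le_excess:
  assumes "bij_betw E {a..b} {1..n}" "c \<in> {a..b}" "E c = n" "I \<subseteq> {a..b} - {c}"
  shows "int (card I) \<le> excess s n E I"
proof -
  have "1 \<le> dg_weight s n (E j) - 1" if "j \<in> I" for j
  proof -
    have "j \<in> {a..b}" "j \<noteq> c"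
      using assms(4) that by auto
    then have "E j \<in> {1..n}" "E j \<noteq> E c"
      using assms(1,2) by (auto simp: bij_betw_def inj_on_eq_iff)
    then show ?thesis
      using dg_weight_ge_2[of "E j" n s] assms(3) by simp
  qed
  then have "(\<Sum>j\<in>I. 1) \<le> excess s n E I"
    unfolding excess_def by (rule sum_mono)
  then show ?thesis
    by simp
qed

theorem lemma4p1:
  fixes n n1 n2 :: nat and s :: "nat \<Rightarrow> nat" and E :: "int \<Rightarrow> nat"
  assumes "n \<ge> 1"
    and "valid_blowups s n"
    and "dg_chain s n"
    and "bij_betw E {- int n1 .. int n2} {1..n}"
    and "\<forall>i\<in>{- int n1 .. int n2}. \<forall>j\<in>{- int n1 .. int n2}.
           dg_adj s n (E i) (E j) \<longleftrightarrow> \<bar>i - j\<bar> = 1"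
    and "E 0 = n"
    and "E (int n2) = 1"
  shows "(\<Sum>j\<in>{- int n1 .. -1}. dg_weight s n (E j)) - int n1 + int (n3 s n) - 1
           = (\<Sum>j\<in>{1 .. int n2}. dg_weight s n (E j)) - int n2
         \<and> n = n1 + n2 + 1
         \<and> int n \<le> int (n3 s n) + min (\<Sum>j\<in>{- int n1 .. -1}. dg_weight s n (E j))
                                      (\<Sum>j\<in>{1 .. int n2}. dg_weight s n (E j))"
proof -
  have zero_in: "0 \<in> {- int n1 .. int n2}"
    by simp
  have "chain_labelling s n E (- int n1) (int n2)"
    using assms(4,5) unfolding chain_labelling_def by blast
  then have balance: "excess s n E {- int n1 .. -1} + int (n3 s n) - 1 = excess s n E {1 .. int n2}"
    using chain_excess_balance[OF assms(2,1) _ zero_in assms(6,7)] by simp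
  have "int (card {- int n1 .. -1}) \<le> excess s n E {- int n1 .. -1}"
    "int (card {1 .. int n2}) \<le> excess s n E {1 .. int n2}"
    by (rule card_le_excess[OF assms(4) zero_in assms(6)]; auto)+
  moreover have "n = n1 + n2 + 1"
    using bij_betw_same_card[OF assms(4)] by simp
  moreover have "1 \<le> n3 s n"
    using n3_ge_1[OF assms(1)] .
  ultimately show ?thesis
    using balance by (simp add: excess_eq)
qed

end
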